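(* Let $G=(V,E)$ be a chordal graph on a non-empty finite vertex set $V$, and let $\{A_v\}_{v\in V}$ be events in a probability space, indexed by the vertices of $G$. Then \[ \Pr\Big(\bigcup_{v\in V} A_v\Big) \;\ge\; \frac{1}{\alpha(G)} \sum_{I\in\mathscr{C}(G)} (-1)^{|I|-1}\,\Pr\Big(\bigcap_{i\in I} A_i\Big), \] and, for every integer $r\ge 1$, \[ \Pr\Big(\bigcup_{v\in V} A_v\Big) \;\ge\; \frac{1}{\alpha(G)} \sum_{\substack{I\in\mathscr{C}(G)\\ |I|\le 2r}} (-1)^{|I|-1}\,\Pr\Big(\bigcap_{i\in I} A_i\Big). \]
   Context: A graph is chordal if it contains no cycle of length four or more as an induced subgraph. Graphs are simple and finite; edges are two-element subsets of $V$. $\mathscr{C}(G)$ denotes the clique complex of $G$: the set of all non-empty subsets $I\subseteq V$ whose elements are pairwise adjacent in $G$. $\alpha(G)$ denotes the independence number of $G$ (maximum size of a set of pairwise non-adjacent vertices). *)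

theory Defs
  imports "HOL-Probability.Probability"
begin

definition simple_graph :: "'a set \<Rightarrow> 'a set set \<Rightarrow> bool" where
  "simple_graph V E \<longleftrightarrow> finite V \<and> (\<forall>e\<in>E. e \<subseteq> V \<and> card e = 2)"

definition adj :: "'a set set \<Rightarrow> 'a \<Rightarrow> 'a \<Rightarrow> bool" where
  "adj E u v \<longleftrightarrow> {u, v} \<in> E"

definition induced_cycle :: "'a set \<Rightarrow> 'a set set \<Rightarrow> 'a list \<Rightarrow> bool" where
  "induced_cycle V E vs \<longleftrightarrow> distinct vs \<and> set vs \<subseteq> V \<and> length vs \<ge> 3 \<and>
     (\<forall>i<length vs. \<forall>j<length vs.
        adj E (vs ! i) (vs ! j) \<longleftrightarrow>
          (j = (i + 1) mod length vs \<or> i = (j + 1) mod length vs))"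

definition chordal :: "'a set \<Rightarrow> 'a set set \<Rightarrow> bool" where
  "chordal V E \<longleftrightarrow> \<not> (\<exists>vs. induced_cycle V E vs \<and> length vs \<ge> 4)"

definition clique_complex :: "'a set \<Rightarrow> 'a set set \<Rightarrow> 'a set set" where
  "clique_complex V E = {I. I \<noteq> {} \<and> I \<subseteq> V \<and> (\<forall>u\<in>I. \<forall>v\<in>I. u \<noteq> v \<longrightarrow> adj E u v)}"

definition independent_set :: "'a set \<Rightarrow> 'a set set \<Rightarrow> 'a set \<Rightarrow> bool" where
  "independent_set V E S \<longleftrightarrow> S \<subseteq> V \<and> (\<forall>u\<in>S. \<forall>v\<in>S. \<not> adj E u v)"

definition independence_number :: "'a set \<Rightarrow> 'a set set \<Rightarrow> nat" where
  "independence_number V E = Max (card ` {S. independent_set V E S})"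

end

theory Submission
  imports Defs
begin

(* Integrating pointwise, it suffices to show for every vertex set W and even m >= 2 that
   the signed count c_m(W) of cliques of size <= m inside W is at most alpha(G), and that
   c_m({}) = 0.  This is proved by induction on |W|, removing a simplicial vertex s of W:
   the cliques through s are s + J for the subsets J of its neighbourhood N, so c_m(W)
   changes by an alternating sum over subsets of N truncated at the odd size m - 1; this
   sum is 1 if N is empty (then s extends an independent set) and <= 0 otherwise. *)

lemma adj_sym: "adj E u v \<longleftrightarrow> adj E v u"
  by (simp add: adj_def insert_commute)

lemma adj_irrefl: "simple_graph V E \<Longrightarrow> \<not> adj E u u"
  unfolding adj_def simple_graph_def by force

lemma adj_in_V: "simple_graph V E \<Longrightarrow> adj E u v \<Longrightarrow> u \<in> V \<and> v \<in> V"
  unfolding adj_def simple_graph_def by blast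

definition walk :: "'a set set \<Rightarrow> 'a set \<Rightarrow> 'a \<Rightarrow> 'a \<Rightarrow> 'a list \<Rightarrow> bool" where
  "walk E U y z ps \<longleftrightarrow>
     ps \<noteq> [] \<and> hd ps = y \<and> last ps = z \<and> set ps \<subseteq> U \<and> successively (adj E) ps"

lemma walk_single: "a \<in> U \<Longrightarrow> walk E U a a [a]"
  unfolding walk_def by simp

lemma walk_edge: "adj E a b \<Longrightarrow> a \<in> U \<Longrightarrow> b \<in> U \<Longrightarrow> walk E U a b [a, b]"
  unfolding walk_def by simp

lemma walk_mono: "walk E U a b ps \<Longrightarrow> U \<subseteq> U' \<Longrightarrow> walk E U' a b ps"
  unfolding walk_def by auto

lemma walk_rev: "walk E U a b ps \<Longrightarrow> walk E U b a (rev ps)"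
  unfolding walk_def
  by (auto simp: hd_rev last_rev adj_sym[of E] intro: successively_mono[of "adj E"])

lemma walk_append: "walk E U a b ps \<Longrightarrow> walk E U b c qs \<Longrightarrow> walk E U a c (ps @ tl qs)"
  unfolding walk_def
  by (cases qs) (auto simp: successively_append_iff successively_Cons)

lemma walk_take:
  assumes "walk E U y z ps" and "i < length ps"
  shows "walk E U y (ps ! i) (take (Suc i) ps)"
proof -
  have "successively (adj E) (take (Suc i) ps @ drop (Suc i) ps)"
    using assms(1) by (simp add: walk_def)
  moreover have "last (take (Suc i) ps) = ps ! i"
    using assms(2) by (simp add: take_Suc_conv_app_nth)
  ultimately show ?thesis
    using assms by (auto simp: walk_def successively_append_iff simp del: append_take_drop_id
                         dest: in_set_takeD)
qed

lemma walk_drop: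
  assumes "walk E U y z ps" and "j < length ps"
  shows "walk E U (ps ! j) z (drop j ps)"
proof -
  have "successively (adj E) (take j ps @ drop j ps)"
    using assms(1) by (simp add: walk_def)
  then show ?thesis
    using assms by (auto simp: walk_def successively_append_iff hd_drop_conv_nth
                         simp del: append_take_drop_id dest: in_set_dropD)
qed

text \<open>A shortest walk is an induced path: its vertices are distinct and two of them are
  adjacent exactly when they are consecutive.  Otherwise a repeated vertex or a chord
  would allow a shortcut.\<close>
lemma shortest_walk_induced:
  assumes w: "walk E U y z ps"
    and shortest: "\<And>qs. walk E U y z qs \<Longrightarrow> length ps \<le> length qs"
    and ij: "i < j" "j < length ps"
  shows "ps ! i \<noteq> ps ! j \<and> (adj E (ps ! i) (ps ! j) \<longleftrightarrow> j = Suc i)"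
proof (intro conjI iffI)
  have prefix: "walk E U y (ps ! i) (take (Suc i) ps)" using walk_take[OF w] ij by simp
  have suffix: "walk E U (ps ! j) z (drop j ps)" using walk_drop[OF w ij(2)] .
  have in_U: "ps ! i \<in> U" "ps ! j \<in> U"
    using w ij nth_mem[of i ps] nth_mem[of j ps] unfolding walk_def by auto
  show "ps ! i \<noteq> ps ! j"
  proof
    assume "ps ! i = ps ! j"
    then have "walk E U y z (take (Suc i) ps @ tl (drop j ps))"
      using walk_append[OF prefix] suffix by simp
    with shortest have "length ps \<le> length (take (Suc i) ps @ tl (drop j ps))" .
    then show False using ij by simp
  qed
  show "j = Suc i" if "adj E (ps ! i) (ps ! j)"
  proof (rule ccontr)
    assume "j \<noteq> Suc i"
    have "walk E U y (ps ! j) (take (Suc i) ps @ tl [ps ! i, ps ! j])"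
      using walk_append[OF prefix walk_edge[OF that in_U]] .
    then have "walk E U y (ps ! j) (take (Suc i) ps @ [ps ! j])" by simp
    from walk_append[OF this suffix]
    have "walk E U y z ((take (Suc i) ps @ [ps ! j]) @ tl (drop j ps))" .
    with shortest have "length ps \<le> length ((take (Suc i) ps @ [ps ! j]) @ tl (drop j ps))" .
    then show False using ij \<open>j \<noteq> Suc i\<close> by simp
  qed
  show "adj E (ps ! i) (ps ! j)" if "j = Suc i"
    using successively_nth[of "adj E" ps i] w ij that unfolding walk_def by simp
qed

lemma induced_cycle_cons:
  assumes sg: "simple_graph V E"
    and x: "x \<in> V" and ps_V: "set ps \<subseteq> V" and x_notin: "x \<notin> set ps" and dist: "distinct ps"
    and len: "length ps \<ge> 3"
    and path: "\<And>i j. i < length ps \<Longrightarrow> j < length ps \<Longrightarrow>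
                      adj E (ps ! i) (ps ! j) \<longleftrightarrow> j = Suc i \<or> i = Suc j"
    and apex: "\<And>k. k < length ps \<Longrightarrow> adj E x (ps ! k) \<longleftrightarrow> k = 0 \<or> k = length ps - 1"
  shows "induced_cycle V E (x # ps)"
  unfolding induced_cycle_def
proof (intro conjI allI impI)
  show "distinct (x # ps)" using x_notin dist by simp
  show "set (x # ps) \<subseteq> V" using x ps_V by simp
  show "3 \<le> length (x # ps)" using len by simp
  define n where "n = length ps"
  have n_ge: "n \<ge> 3" using len by (simp add: n_def)
  have succ_mod: "(Suc k + 1) mod Suc n = (if k = n - 1 then 0 else Suc k + 1)" if "k < n" for k
    using that n_ge by (cases "k = n - 1") auto
  have one_mod: "1 mod Suc n = 1" using n_ge by simp
  have ne: "ps \<noteq> []" using len by (cases ps) auto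
  fix i j assume i: "i < length (x # ps)" and j: "j < length (x # ps)"
  show "adj E ((x # ps) ! i) ((x # ps) ! j) \<longleftrightarrow>
        j = (i + 1) mod length (x # ps) \<or> i = (j + 1) mod length (x # ps)"
  proof (cases i; cases j)
    assume "i = 0" "j = 0"
    then show ?thesis using adj_irrefl[OF sg] ne by simp
  next
    fix l assume "i = 0" "j = Suc l"
    then show ?thesis using apex[of l] succ_mod[of l] one_mod j by (auto simp: n_def)
  next
    fix k assume "i = Suc k" "j = 0"
    then show ?thesis
      using apex[of k] succ_mod[of k] one_mod i adj_sym[of E x] by (auto simp: n_def)
  next
    fix k l assume "i = Suc k" "j = Suc l"
    then show ?thesis using path[of k l] succ_mod[of k] succ_mod[of l] i j by (auto simp: n_def)
  qed
qed

text \<open>The use of chordality: two non-adjacent neighbours \<open>y\<close>, \<open>z\<close> of a vertex \<open>x\<close> cannot be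
  joined by a walk whose inner vertices avoid \<open>x\<close> and its neighbours.  A shortest such walk
  would be an induced path which, closed up through \<open>x\<close>, is an induced cycle of length at
  least four.\<close>
lemma chordal_no_detour:
  assumes sg: "simple_graph V E" and ch: "chordal V E"
    and x: "x \<in> V" and xy: "adj E x y" and xz: "adj E x z" and yz: "\<not> adj E y z" "y \<noteq> z"
    and T: "\<forall>t\<in>T. t \<in> V \<and> t \<noteq> x \<and> \<not> adj E x t"
    and detour: "walk E (insert y (insert z T)) y z ps\<^sub>0"
  shows False
proof -
  let ?U = "insert y (insert z T)"
  obtain ps where w: "walk E ?U y z ps" and shortest: "\<And>qs. walk E ?U y z qs \<Longrightarrow> length ps \<le> length qs"
    using ex_has_least_nat[of "walk E ?U y z" ps\<^sub>0 length] detour by blast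
  note induced = shortest_walk_induced[OF w shortest]
  have ne: "ps \<noteq> []" and ps_U: "set ps \<subseteq> ?U" and succ: "successively (adj E) ps"
    using w unfolding walk_def by auto
  have first: "ps ! 0 = y" and last: "ps ! (length ps - 1) = z"
    using w ne unfolding walk_def by (auto simp: hd_conv_nth last_conv_nth)
  have dist: "distinct ps"
    unfolding distinct_conv_nth using induced by (metis linorder_neqE_nat)
  have len: "length ps \<ge> 3"
  proof (rule ccontr)
    assume "\<not> length ps \<ge> 3"
    moreover have "length ps \<noteq> 1" using first last \<open>y \<noteq> z\<close> by auto
    moreover have "length ps > 0" using ne by simp
    ultimately have "length ps = 2" by linarith
    then show False using successively_nth[OF succ, of 0] first last yz by simp
  qed
  have path: "adj E (ps ! i) (ps ! j) \<longleftrightarrow> j = Suc i \<or> i = Suc j"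
    if "i < length ps" "j < length ps" for i j
    using induced[of i j] induced[of j i] that adj_irrefl[OF sg] adj_sym[of E "ps ! i"]
    by (cases i j rule: linorder_cases) auto
  have apex: "adj E x (ps ! k) \<longleftrightarrow> k = 0 \<or> k = length ps - 1" if k: "k < length ps" for k
  proof (cases "k = 0 \<or> k = length ps - 1")
    case True then show ?thesis using first last xy xz by auto
  next
    case False
    then have "ps ! k \<noteq> y" "ps ! k \<noteq> z"
      using nth_eq_iff_index_eq[OF dist, of k 0] nth_eq_iff_index_eq[OF dist, of k "length ps - 1"]
        first last k False ne by auto
    moreover have "ps ! k \<in> ?U" using ps_U k nth_mem by blast
    ultimately show ?thesis using T False by auto
  qed
  have "set ps \<subseteq> V" using ps_U T adj_in_V[OF sg xy] adj_in_V[OF sg xz] by auto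
  moreover have "x \<notin> set ps" using ps_U T adj_irrefl[OF sg] xy xz by auto
  ultimately have "induced_cycle V E (x # ps)"
    using induced_cycle_cons[OF sg x _ _ dist len path apex] by blast
  moreover have "length (x # ps) \<ge> 4" using len by simp
  ultimately show False using ch unfolding chordal_def by blast
qed

definition component :: "'a set set \<Rightarrow> 'a set \<Rightarrow> 'a \<Rightarrow> 'a set" where
  "component E U u = {w. \<exists>ps. walk E U u w ps}"

lemma component_subset: "component E U u \<subseteq> U"
  unfolding component_def walk_def by (auto intro: last_in_set)

lemma component_self: "u \<in> U \<Longrightarrow> u \<in> component E U u"
  unfolding component_def using walk_single by fast

lemma component_closed:
  assumes "c \<in> component E U u" "w \<in> U" "adj E c w"
  shows "w \<in> component E U u"
proof -
  obtain ps where "walk E U u c ps" using assms(1) unfolding component_def by blast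
  moreover have "walk E U c w [c, w]" using assms component_subset[of E U u] by (intro walk_edge) auto
  ultimately show ?thesis unfolding component_def by (blast intro: walk_append)
qed

text \<open>In a chordal
  graph, any two neighbours of \<open>x\<close> that both have a neighbour in the same component of
  \<open>T\<close> are adjacent: otherwise the component provides a forbidden detour between them.\<close>
lemma attachments_adjacent:
  assumes sg: "simple_graph V E" and ch: "chordal V E" and x: "x \<in> V"
    and T: "\<forall>t\<in>T. t \<in> V \<and> t \<noteq> x \<and> \<not> adj E x t"
    and y: "adj E x y" "adj E y c\<^sub>1" "c\<^sub>1 \<in> component E T u"
    and z: "adj E x z" "adj E z c\<^sub>2" "c\<^sub>2 \<in> component E T u"
    and "y \<noteq> z"
  shows "adj E y z"
proof (rule ccontr)
  assume yz: "\<not> adj E y z"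
  let ?U = "insert y (insert z T)"
  obtain p\<^sub>1 where p\<^sub>1: "walk E T u c\<^sub>1 p\<^sub>1" using y(3) unfolding component_def by blast
  obtain p\<^sub>2 where p\<^sub>2: "walk E T u c\<^sub>2 p\<^sub>2" using z(3) unfolding component_def by blast
  have c_T: "c\<^sub>1 \<in> T" "c\<^sub>2 \<in> T" using y(3) z(3) component_subset[of E T u] by blast+
  have w\<^sub>1: "walk E ?U y c\<^sub>1 [y, c\<^sub>1]" using walk_edge[OF y(2)] c_T by simp
  have w\<^sub>2: "walk E ?U c\<^sub>1 u (rev p\<^sub>1)" by (rule walk_mono[OF walk_rev[OF p\<^sub>1]]) auto
  have w\<^sub>3: "walk E ?U u c\<^sub>2 p\<^sub>2" by (rule walk_mono[OF p\<^sub>2]) auto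
  have w\<^sub>4: "walk E ?U c\<^sub>2 z [c\<^sub>2, z]" using z(2) c_T adj_sym[of E z] by (intro walk_edge) auto
  have "walk E ?U y z ((([y, c\<^sub>1] @ tl (rev p\<^sub>1)) @ tl p\<^sub>2) @ tl [c\<^sub>2, z])"
    by (intro walk_append[OF walk_append[OF walk_append[OF w\<^sub>1 w\<^sub>2] w\<^sub>3] w\<^sub>4])
  then show False using chordal_no_detour[OF sg ch x y(1) z(1) yz \<open>y \<noteq> z\<close> T] by blast
qed

definition simplicial :: "'a set set \<Rightarrow> 'a set \<Rightarrow> 'a \<Rightarrow> bool" where
  "simplicial E W s \<longleftrightarrow> (\<forall>a\<in>W. \<forall>b\<in>W. adj E s a \<longrightarrow> adj E s b \<longrightarrow> a \<noteq> b \<longrightarrow> adj E a b)"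

text \<open>Applying the
  induction hypothesis of Dirac's lemma at such a vertex yields a simplicial vertex outside \<open>S\<close>.\<close>
lemma clique_pivot:
  assumes "S \<subseteq> H" and S_clique: "\<And>a b. a \<in> S \<Longrightarrow> b \<in> S \<Longrightarrow> a \<noteq> b \<Longrightarrow> adj E a b"
    and ab: "a \<in> H" "b \<in> H" "a \<noteq> b" "\<not> adj E a b"
  obtains p where "p \<in> H" "\<exists>v\<in>H. v \<noteq> p \<and> \<not> adj E p v" "\<And>w. w \<in> S \<Longrightarrow> w \<noteq> p \<Longrightarrow> adj E p w"
proof (cases "\<exists>p\<in>S. \<exists>v\<in>H. v \<noteq> p \<and> \<not> adj E p v")
  case True
  then obtain p where p: "p \<in> S" "p \<in> H" "\<exists>v\<in>H. v \<noteq> p \<and> \<not> adj E p v"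
    using \<open>S \<subseteq> H\<close> by blast
  have "adj E p w" if "w \<in> S" "w \<noteq> p" for w
    using S_clique[of p w] p(1) that by simp
  with p(2,3) show ?thesis by (rule that)
next
  case False
  have "adj E a w" if w: "w \<in> S" "w \<noteq> a" for w
  proof -
    have "\<forall>v\<in>H. v \<noteq> w \<longrightarrow> adj E w v" using False w(1) by blast
    then have "adj E w a" using ab(1) w(2) by auto
    then show ?thesis using adj_sym[of E w a] by simp
  qed
  moreover have "\<exists>v\<in>H. v \<noteq> a \<and> \<not> adj E a v" using ab by (intro bexI[of _ b]) auto
  ultimately show ?thesis using ab(1) by (intro that)
qed

text \<open>The separator structure behind Dirac's lemma.\<close>
lemma nonneighbour_component:
  assumes sg: "simple_graph V E" and ch: "chordal V E"
    and W: "W \<subseteq> V" "x \<in> W" "u \<in> W" "u \<noteq> x" "\<not> adj E x u"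
    and C_def: "C = component E {w\<in>W. w \<noteq> x \<and> \<not> adj E x w} u"
    and S_def: "S = {w\<in>W. adj E x w \<and> (\<exists>c\<in>C. adj E w c)}"
  shows "u \<in> C" and "C \<subseteq> {w\<in>W. w \<noteq> x \<and> \<not> adj E x w}" and "S \<subseteq> W - {x}"
    and "\<And>a b. a \<in> S \<Longrightarrow> b \<in> S \<Longrightarrow> a \<noteq> b \<Longrightarrow> adj E a b"
    and "\<And>c w. c \<in> C \<Longrightarrow> w \<in> W \<Longrightarrow> adj E c w \<Longrightarrow> w \<in> C \<union> S"
proof -
  define T where "T = {w\<in>W. w \<noteq> x \<and> \<not> adj E x w}"
  have C_def': "C = component E T u" unfolding C_def T_def ..
  show "u \<in> C" unfolding C_def' using W by (intro component_self) (simp add: T_def)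
  show C_T: "C \<subseteq> {w\<in>W. w \<noteq> x \<and> \<not> adj E x w}" unfolding C_def by (rule component_subset)
  show "S \<subseteq> W - {x}" using adj_irrefl[OF sg] unfolding S_def by auto
  have T_V: "\<forall>t\<in>T. t \<in> V \<and> t \<noteq> x \<and> \<not> adj E x t" using W(1) unfolding T_def by auto
  show "adj E a b" if ab: "a \<in> S" "b \<in> S" "a \<noteq> b" for a b
  proof -
    obtain c\<^sub>1 c\<^sub>2 where a: "adj E x a" "adj E a c\<^sub>1" "c\<^sub>1 \<in> C"
      and b: "adj E x b" "adj E b c\<^sub>2" "c\<^sub>2 \<in> C"
      using ab unfolding S_def by blast
    have "x \<in> V" using W(1,2) by blast
    from attachments_adjacent[OF sg ch this T_V a(1,2) _ b(1,2) _ ab(3)] a(3) b(3)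
    show ?thesis unfolding C_def' .
  qed
  show "w \<in> C \<union> S" if "c \<in> C" "w \<in> W" "adj E c w" for c w
  proof (cases "adj E x w")
    case True
    then show ?thesis using that adj_sym[of E c w] unfolding S_def by auto
  next
    case False
    have "w \<noteq> x" using that C_T adj_sym[of E c w] by auto
    then have "w \<in> T" using False that(2) unfolding T_def by simp
    then show ?thesis using component_closed that unfolding C_def' by fast
  qed
qed

text \<open>Dirac's lemma, in the form suited to induction: if \<open>x\<close> has a non-neighbour in \<open>W\<close>, then
  \<open>W\<close> contains a simplicial vertex different from and non-adjacent to \<open>x\<close>.  With \<open>C\<close>, \<open>S\<close> as
  above, \<open>H = C \<union> S\<close> is smaller than \<open>W\<close>.  By induction (at \<open>u\<close> if \<open>H\<close> is complete, otherwise
  at a vertex given by the previous lemma) \<open>H\<close> has a simplicial vertex in \<open>C\<close>, and since all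
  its neighbours in \<open>W\<close> lie in \<open>H\<close>, it is simplicial in \<open>W\<close>.\<close>
lemma simplicial_avoiding:
  assumes sg: "simple_graph V E" and ch: "chordal V E"
    and "W \<subseteq> V" "x \<in> W" "u \<in> W" "u \<noteq> x" "\<not> adj E x u"
  shows "\<exists>s\<in>W. s \<noteq> x \<and> \<not> adj E x s \<and> simplicial E W s"
  using assms(3-)
proof (induction "card W" arbitrary: W x u rule: less_induct)
  case less
  define C where "C = component E {w\<in>W. w \<noteq> x \<and> \<not> adj E x w} u"
  define S where "S = {w\<in>W. adj E x w \<and> (\<exists>c\<in>C. adj E w c)}"
  define H where "H = C \<union> S"
  note sep = nonneighbour_component[OF sg ch less.prems C_def S_def]
  have H_W: "H \<subseteq> W - {x}" using sep(2,3) unfolding H_def by blast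
  have fin_W: "finite W" using less.prems(1) sg finite_subset unfolding simple_graph_def by blast
  have H_smaller: "card H < card W"
    using psubset_card_mono[OF fin_W] H_W less.prems(2) by blast
  have "\<exists>s\<in>C. simplicial E H s"
  proof (cases "\<forall>a\<in>H. \<forall>b\<in>H. a \<noteq> b \<longrightarrow> adj E a b")
    case True
    then show ?thesis using sep(1) unfolding simplicial_def H_def by blast
  next
    case False
    then obtain a b where "a \<in> H" "b \<in> H" "a \<noteq> b" "\<not> adj E a b" by blast
    moreover have "S \<subseteq> H" unfolding H_def by blast
    ultimately obtain p where "p \<in> H" and "\<exists>v\<in>H. v \<noteq> p \<and> \<not> adj E p v"
      and p_S: "\<And>w. w \<in> S \<Longrightarrow> w \<noteq> p \<Longrightarrow> adj E p w"
      using clique_pivot[of S H E a b] sep(4) by blast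
    then obtain v where p: "p \<in> H" "v \<in> H" "v \<noteq> p" "\<not> adj E p v" by blast
    have "H \<subseteq> V" using H_W less.prems(1) by blast
    from less.hyps[OF H_smaller this p]
    obtain s where s: "s \<in> H" "s \<noteq> p" "\<not> adj E p s" "simplicial E H s" by blast
    then have "s \<in> C" using p_S unfolding H_def by blast
    then show ?thesis using s by blast
  qed
  then obtain s where "s \<in> C" and "simplicial E H s" by blast
  then have "simplicial E W s"
    using sep(5) H_W unfolding simplicial_def H_def by blast
  then show ?case using \<open>s \<in> C\<close> sep(2) by blast
qed

lemma simplicial_exists:
  assumes sg: "simple_graph V E" and ch: "chordal V E" and "W \<subseteq> V" "W \<noteq> {}"
  shows "\<exists>s\<in>W. simplicial E W s"
proof (cases "\<forall>a\<in>W. \<forall>b\<in>W. a \<noteq> b \<longrightarrow> adj E a b")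
  case True
  then show ?thesis using assms(4) unfolding simplicial_def by blast
next
  case False
  then obtain a b where "a \<in> W" "b \<in> W" "b \<noteq> a" "\<not> adj E a b" by blast
  then show ?thesis using simplicial_avoiding[OF sg ch \<open>W \<subseteq> V\<close>] by blast
qed

text \<open>Truncated alternating sums over the subsets of a finite set \<open>N\<close>: for \<open>N \<noteq> {}\<close> one has
  \<open>\<Sum>J\<subseteq>N, |J|\<le>k. (-1)^|J| = (-1)^k * C(|N|-1, k)\<close>, which is non-positive for odd \<open>k\<close>.\<close>
lemma alternating_subset_sum:
  assumes "finite N"
  shows "(\<Sum>J | J \<subseteq> N \<and> card J \<le> k. (-1::real) ^ card J)
         = (\<Sum>j\<le>k. (-1) ^ j * of_nat (card N choose j))"
proof -
  have fin: "finite {J. J \<subseteq> N \<and> card J \<le> k}" using assms by simp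
  have "(\<Sum>J | J \<subseteq> N \<and> card J \<le> k. (-1::real) ^ card J)
      = (\<Sum>j\<le>k. \<Sum>J \<in> {J \<in> {J. J \<subseteq> N \<and> card J \<le> k}. card J = j}. (-1) ^ card J)"
    by (rule sum.group[symmetric, OF fin finite_atMost]) auto
  also have "\<dots> = (\<Sum>j\<le>k. \<Sum>J | J \<subseteq> N \<and> card J = j. (-1) ^ j)"
    by (intro sum.cong) auto
  also have "\<dots> = (\<Sum>j\<le>k. (-1) ^ j * of_nat (card N choose j))"
    using n_subsets[OF assms] by (simp add: mult.commute)
  finally show ?thesis .
qed

lemma alternating_subset_sum_nonpos:
  assumes "finite N" "N \<noteq> {}" "odd k"
  shows "(\<Sum>J | J \<subseteq> N \<and> card J \<le> k. (-1::real) ^ card J) \<le> 0"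
proof -
  have "(\<Sum>J | J \<subseteq> N \<and> card J \<le> k. (-1::real) ^ card J)
      = (\<Sum>j\<le>k. (of_nat (card N) gchoose j) * (-1) ^ j)"
    by (simp add: alternating_subset_sum[OF assms(1)] binomial_gbinomial mult.commute)
  also have "\<dots> = (-1) ^ k * (of_nat (card N) - 1 gchoose k)"
    by (rule gbinomial_sum_lower_neg)
  also have "\<dots> = - of_nat (card N - 1 choose k)"
    using assms by (simp add: binomial_gbinomial of_nat_diff card_gt_0_iff Suc_le_eq)
  finally show ?thesis by simp
qed

text \<open>At a sample point \<open>x\<close>, the integrand of the
  Bonferroni sum equals the clique sum of \<open>{v. x \<in> A v}\<close>.\<close>
definition clique_sum :: "'a set \<Rightarrow> 'a set set \<Rightarrow> nat \<Rightarrow> 'a set \<Rightarrow> real" where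
  "clique_sum V E m W = (\<Sum>I | I \<in> clique_complex V E \<and> I \<subseteq> W \<and> card I \<le> m. (-1) ^ (card I - 1))"

lemma finite_clique_complex: "simple_graph V E \<Longrightarrow> finite (clique_complex V E)"
  unfolding simple_graph_def clique_complex_def by (rule finite_subset[of _ "Pow V"]) auto

lemma clique_sum_empty: "clique_sum V E m {} = 0"
  unfolding clique_sum_def clique_complex_def by simp

text \<open>Adding a simplicial vertex \<open>s\<close> of \<open>W\<close> to any set of its neighbours in \<open>W\<close> gives a
  clique; so the cliques through \<open>s\<close> correspond to the subsets of its neighbourhood.\<close>
lemma clique_insert_simplicial:
  assumes "W \<subseteq> V" "s \<in> W" "simplicial E W s" "J \<subseteq> {w\<in>W. adj E s w}"
  shows "insert s J \<in> clique_complex V E"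
  unfolding clique_complex_def
proof (intro CollectI conjI ballI impI)
  show "insert s J \<noteq> {}" "insert s J \<subseteq> V" using assms(1,2,4) by auto
  fix u v assume "u \<in> insert s J" "v \<in> insert s J" "u \<noteq> v"
  then consider "u = s" "v \<in> J" | "v = s" "u \<in> J" | "u \<in> J" "v \<in> J" by blast
  then show "adj E u v"
  proof cases
    case 1 then show ?thesis using assms(4) by blast
  next
    case 2 then show ?thesis using assms(4) adj_sym[of E u s] by blast
  next
    case 3 then show ?thesis using assms(3,4) \<open>u \<noteq> v\<close> unfolding simplicial_def by blast
  qed
qed

lemma clique_sum_remove_simplicial:
  assumes sg: "simple_graph V E" and W: "W \<subseteq> V" "s \<in> W" "simplicial E W s" and "m \<ge> 1"
  shows "clique_sum V E m W = clique_sum V E m (W - {s})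
           + (\<Sum>J | J \<subseteq> {w\<in>W. adj E s w} \<and> card J \<le> m - 1. (-1) ^ card J)"
proof -
  define N where "N = {w\<in>W. adj E s w}"
  define X where "X = {I. I \<in> clique_complex V E \<and> I \<subseteq> W \<and> card I \<le> m}"
  have fin_X: "finite X" using finite_clique_complex[OF sg] unfolding X_def by simp
  have fin_V: "finite V" using sg unfolding simple_graph_def by simp
  have s_N: "s \<notin> N" using adj_irrefl[OF sg] unfolding N_def by blast
  have without_s: "X \<inter> {I. s \<notin> I} = {I. I \<in> clique_complex V E \<and> I \<subseteq> W - {s} \<and> card I \<le> m}"
    unfolding X_def by blast
  have with_s: "(\<Sum>I \<in> X - {I. s \<notin> I}. (-1::real) ^ (card I - 1))
      = (\<Sum>J | J \<subseteq> N \<and> card J \<le> m - 1. (-1) ^ card J)"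
  proof (rule sum.reindex_bij_witness[where i = "insert s" and j = "\<lambda>I. I - {s}"])
    fix I assume "I \<in> X - {I. s \<notin> I}"
    then have I: "I \<in> clique_complex V E" "I \<subseteq> W" "card I \<le> m" "s \<in> I"
      unfolding X_def by auto
    then have "finite I" using finite_subset[OF _ fin_V] W(1) by blast
    show "insert s (I - {s}) = I" using I(4) by blast
    show "I - {s} \<in> {J. J \<subseteq> N \<and> card J \<le> m - 1}"
      using I \<open>finite I\<close> unfolding N_def clique_complex_def by auto
    show "(-1::real) ^ card (I - {s}) = (-1) ^ (card I - 1)"
      using I(4) \<open>finite I\<close> by simp
  next
    fix J assume J: "J \<in> {J. J \<subseteq> N \<and> card J \<le> m - 1}"
    then have "finite J" using finite_subset[OF _ fin_V] W(1) unfolding N_def by blast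
    show "insert s J - {s} = J" using J s_N by blast
    have "insert s J \<in> clique_complex V E"
      using J W by (intro clique_insert_simplicial) (auto simp: N_def)
    moreover have "card (insert s J) \<le> m"
      using J s_N \<open>finite J\<close> \<open>m \<ge> 1\<close> by (auto simp: card_insert_if)
    ultimately show "insert s J \<in> X - {I. s \<notin> I}"
      using J W unfolding X_def N_def by auto
  qed
  have "(\<Sum>I\<in>X. (-1::real) ^ (card I - 1))
      = (\<Sum>I \<in> X \<inter> {I. s \<notin> I}. (-1) ^ (card I - 1)) + (\<Sum>I \<in> X - {I. s \<notin> I}. (-1) ^ (card I - 1))"
    by (rule sum.Int_Diff[OF fin_X])
  then show ?thesis
    unfolding clique_sum_def X_def[symmetric] N_def[symmetric] without_s[symmetric] with_s by simp
qed

lemma independent_insert: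
  assumes sg: "simple_graph V E" and "independent_set V E S" "s \<in> V" "\<forall>w\<in>S. \<not> adj E s w"
  shows "independent_set V E (insert s S)"
  using assms adj_irrefl[OF sg, of s] adj_sym[of E _ s] unfolding independent_set_def by blast

text \<open>By induction,
  removing a simplicial vertex \<open>s\<close>: if \<open>s\<close> has no neighbour in \<open>W\<close> the clique sum grows by one
  and \<open>s\<close> enlarges the independent set; otherwise it does not grow.\<close>
lemma clique_sum_le_independent:
  assumes sg: "simple_graph V E" and ch: "chordal V E" and m: "even m" "m \<ge> 2" and "W \<subseteq> V"
  shows "\<exists>S\<subseteq>W. independent_set V E S \<and> clique_sum V E m W \<le> card S"
  using \<open>W \<subseteq> V\<close>
proof (induction "card W" arbitrary: W rule: less_induct)
  case less
  show ?case
  proof (cases "W = {}")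
    case True
    then show ?thesis by (auto simp: clique_sum_empty independent_set_def)
  next
    case False
    have fin_W: "finite W" using less.prems sg finite_subset unfolding simple_graph_def by blast
    obtain s where s: "s \<in> W" "simplicial E W s" using simplicial_exists[OF sg ch less.prems False] by blast
    define N where "N = {w\<in>W. adj E s w}"
    have "card (W - {s}) < card W" using card_Diff1_less[OF fin_W s(1)] .
    have W_s: "W - {s} \<subseteq> V" using less.prems by blast
    obtain S where S: "S \<subseteq> W - {s}" "independent_set V E S"
      and bound: "clique_sum V E m (W - {s}) \<le> card S"
      using less.hyps[OF \<open>card (W - {s}) < card W\<close> W_s] by blast
    have step: "clique_sum V E m W = clique_sum V E m (W - {s})
                  + (\<Sum>J | J \<subseteq> N \<and> card J \<le> m - 1. (-1) ^ card J)"
      unfolding N_def using clique_sum_remove_simplicial[OF sg less.prems s] m by simp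
    show ?thesis
    proof (cases "N = {}")
      case True
      have "{J. J \<subseteq> N \<and> card J \<le> m - 1} = {{}}" using True by auto
      then have "clique_sum V E m W = clique_sum V E m (W - {s}) + 1" using step by simp
      also have "\<dots> \<le> card (insert s S)"
        using bound S(1) finite_subset[OF S(1)] fin_W by (subst card_insert_disjoint) auto
      finally show ?thesis
        using S s(1) True less.prems independent_insert[OF sg S(2), of s] unfolding N_def
        by (intro exI[of _ "insert s S"]) auto
    next
      case False
      have "odd (m - 1)" using m by simp
      then have "(\<Sum>J | J \<subseteq> N \<and> card J \<le> m - 1. (-1::real) ^ card J) \<le> 0"
        using alternating_subset_sum_nonpos[OF _ False] fin_W unfolding N_def by simp
      then show ?thesis using step bound S by auto
    qed
  qed
qed

lemma independent_le_independence_number: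
  assumes sg: "simple_graph V E" and "independent_set V E S"
  shows "card S \<le> independence_number V E"
  unfolding independence_number_def
proof (rule Max_ge)
  have "finite V" using sg unfolding simple_graph_def by simp
  then have "finite {S. independent_set V E S}"
    by (rule finite_subset[rotated, OF finite_Pow_iff[THEN iffD2]]) (auto simp: independent_set_def)
  then show "finite (card ` {S. independent_set V E S})" by simp
  show "card S \<in> card ` {S. independent_set V E S}" using assms(2) by simp
qed

lemma independence_number_pos:
  assumes sg: "simple_graph V E" and "V \<noteq> {}"
  shows "independence_number V E > 0"
proof -
  obtain v where "v \<in> V" using assms(2) by blast
  then have "independent_set V E {v}" using adj_irrefl[OF sg] unfolding independent_set_def by auto
  from independent_le_independence_number[OF sg this] show ?thesis by simp
qed

lemma clique_indicator_sum:
  assumes sg: "simple_graph V E"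
  shows "(\<Sum>I | I \<in> clique_complex V E \<and> card I \<le> m. (-1) ^ (card I - 1) * indicator (\<Inter>i\<in>I. A i) x)
         = clique_sum V E m {v\<in>V. x \<in> A v}"
proof -
  define X where "X = {I. I \<in> clique_complex V E \<and> card I \<le> m}"
  define S where "S = {v\<in>V. x \<in> A v}"
  have "finite X" using finite_clique_complex[OF sg] unfolding X_def by simp
  have "(\<Sum>I\<in>X. (-1) ^ (card I - 1) * indicator (\<Inter>i\<in>I. A i) x)
      = (\<Sum>I\<in>X. if I \<subseteq> S then (-1::real) ^ (card I - 1) else 0)"
  proof (rule sum.cong)
    fix I assume "I \<in> X"
    then have "I \<subseteq> V" unfolding X_def clique_complex_def by simp
    then show "(-1) ^ (card I - 1) * indicator (\<Inter>i\<in>I. A i) x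
             = (if I \<subseteq> S then (-1::real) ^ (card I - 1) else 0)"
      unfolding S_def indicator_def by auto
  qed simp
  also have "\<dots> = (\<Sum>I | I \<in> X \<and> I \<subseteq> S. (-1) ^ (card I - 1))"
    by (rule sum.inter_filter[OF \<open>finite X\<close>, symmetric])
  also have "\<dots> = clique_sum V E m S"
    unfolding clique_sum_def X_def by (rule sum.cong) auto
  finally show ?thesis unfolding X_def S_def .
qed

lemma clique_indicator_sum_le:
  assumes sg: "simple_graph V E" and ch: "chordal V E" and m: "even m" "m \<ge> 2"
  shows "(\<Sum>I | I \<in> clique_complex V E \<and> card I \<le> m. (-1) ^ (card I - 1) * indicator (\<Inter>i\<in>I. A i) x)
         \<le> real (independence_number V E) * indicator (\<Union>v\<in>V. A v) x"
proof (cases "{v\<in>V. x \<in> A v} = {}")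
  case True
  then show ?thesis
    using clique_indicator_sum[OF sg, where m = m and A = A and x = x, unfolded True]
    by (simp add: clique_sum_empty)
next
  case False
  obtain S where "independent_set V E S" and S: "clique_sum V E m {v\<in>V. x \<in> A v} \<le> card S"
    using clique_sum_le_independent[OF sg ch m, of "{v\<in>V. x \<in> A v}"] by blast
  then have "clique_sum V E m {v\<in>V. x \<in> A v} \<le> real (independence_number V E)"
    using independent_le_independence_number[OF sg] by (meson of_nat_le_iff order_trans)
  moreover have "x \<in> (\<Union>v\<in>V. A v)" using False by blast
  ultimately show ?thesis
    using clique_indicator_sum[OF sg, where m = m and A = A and x = x] by simp
qed

lemma chordal_bonferroni:
  assumes sg: "simple_graph V E" and ch: "chordal V E" and m: "even m" "m \<ge> 2"
    and M: "finite_measure M" and A: "\<And>v. v \<in> V \<Longrightarrow> A v \<in> sets M"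
  shows "(\<Sum>I | I \<in> clique_complex V E \<and> card I \<le> m. (-1) ^ (card I - 1) * measure M (\<Inter>i\<in>I. A i))
         \<le> real (independence_number V E) * measure M (\<Union>v\<in>V. A v)"
proof -
  interpret finite_measure M by (rule M)
  define X where "X = {I. I \<in> clique_complex V E \<and> card I \<le> m}"
  define \<alpha> where "\<alpha> = real (independence_number V E)"
  have fin_V: "finite V" using sg unfolding simple_graph_def by simp
  have "finite X" using finite_clique_complex[OF sg] unfolding X_def by simp
  have meas_Inter: "(\<Inter>i\<in>I. A i) \<in> sets M" if "I \<in> X" for I
  proof -
    have "I \<subseteq> V" "I \<noteq> {}" using that unfolding X_def clique_complex_def by auto
    then show ?thesis using A finite_subset[OF _ fin_V] by (intro sets.finite_INT) auto
  qed
  have meas_Union: "(\<Union>v\<in>V. A v) \<in> sets M" using A fin_V by (intro sets.finite_UN) auto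
  have integrable: "integrable M (indicator B :: 'b \<Rightarrow> real)" if "B \<in> sets M" for B
    using that by (simp add: less_top[symmetric])
  have "(\<Sum>I\<in>X. (-1) ^ (card I - 1) * measure M (\<Inter>i\<in>I. A i))
      = (\<Sum>I\<in>X. \<integral>x. (-1) ^ (card I - 1) * indicator (\<Inter>i\<in>I. A i) x \<partial>M)"
    using meas_Inter by (intro sum.cong) (simp_all add: sets.Int_space_eq2)
  also have "\<dots> = (\<integral>x. (\<Sum>I\<in>X. (-1) ^ (card I - 1) * indicator (\<Inter>i\<in>I. A i) x) \<partial>M)"
    using meas_Inter integrable by (intro Bochner_Integration.integral_sum[symmetric]) auto
  also have "\<dots> \<le> (\<integral>x. \<alpha> * indicator (\<Union>v\<in>V. A v) x \<partial>M)"
    using meas_Inter meas_Union integrable clique_indicator_sum_le[OF sg ch m, of A]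
    unfolding X_def \<alpha>_def by (intro integral_mono) auto
  also have "\<dots> = \<alpha> * measure M (\<Union>v\<in>V. A v)"
    using meas_Union by (simp add: sets.Int_space_eq2)
  finally show ?thesis unfolding X_def \<alpha>_def .
qed

text \<open>The theorem: the first inequality is the truncation at \<open>m = 2 |V|\<close>, where no clique
  is cut off; both follow by dividing by \<open>\<alpha>(G) \<ge> 1\<close>.\<close>
theorem theorem1:
  fixes V :: "'a set" and E :: "'a set set"
    and M :: "'b measure" and A :: "'a \<Rightarrow> 'b set"
  assumes "simple_graph V E" and "V \<noteq> {}" and "chordal V E"
    and "prob_space M" and "\<And>v. v \<in> V \<Longrightarrow> A v \<in> sets M"
  shows "measure M (\<Union>v\<in>V. A v) \<ge>
           (1 / real (independence_number V E)) *
             (\<Sum>I\<in>clique_complex V E. (-1) ^ (card I - 1) * measure M (\<Inter>i\<in>I. A i)) \<and>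
         (\<forall>r::nat. r \<ge> 1 \<longrightarrow> measure M (\<Union>v\<in>V. A v) \<ge>
           (1 / real (independence_number V E)) *
             (\<Sum>I\<in>{I\<in>clique_complex V E. card I \<le> 2 * r}.
                (-1) ^ (card I - 1) * measure M (\<Inter>i\<in>I. A i)))"
proof -
  note sg = assms(1) and ch = assms(3)
  have fin_V: "finite V" using sg unfolding simple_graph_def by simp
  have \<alpha>_pos: "real (independence_number V E) > 0"
    using independence_number_pos[OF sg assms(2)] by simp
  have "finite_measure M" using assms(4) by (simp add: prob_space_def)
  have truncated: "(1 / real (independence_number V E)) *
      (\<Sum>I\<in>{I\<in>clique_complex V E. card I \<le> 2 * r}. (-1) ^ (card I - 1) * measure M (\<Inter>i\<in>I. A i))
      \<le> measure M (\<Union>v\<in>V. A v)" if "r \<ge> 1" for r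
  proof -
    have "(\<Sum>I\<in>{I\<in>clique_complex V E. card I \<le> 2 * r}. (-1) ^ (card I - 1) * measure M (\<Inter>i\<in>I. A i))
        \<le> real (independence_number V E) * measure M (\<Union>v\<in>V. A v)"
      by (rule chordal_bonferroni[OF sg ch _ _ \<open>finite_measure M\<close>]) (use that assms(5) in auto)
    then show ?thesis using \<alpha>_pos by (simp add: pos_divide_le_eq mult.commute)
  qed
  have "card I \<le> 2 * card V" if "I \<in> clique_complex V E" for I
    using that card_mono[OF fin_V, of I] unfolding clique_complex_def by simp
  then have all_cliques: "{I\<in>clique_complex V E. card I \<le> 2 * card V} = clique_complex V E" by blast
  have "card V \<ge> 1" using fin_V assms(2) by (simp add: Suc_le_eq card_gt_0_iff)
  with truncated[of "card V"] have "(1 / real (independence_number V E)) *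
      (\<Sum>I\<in>clique_complex V E. (-1) ^ (card I - 1) * measure M (\<Inter>i\<in>I. A i))
      \<le> measure M (\<Union>v\<in>V. A v)" unfolding all_cliques .
  then show ?thesis using truncated by blast
qed

end
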